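(* Let $\mathrm{stat}_1,\dots,\mathrm{stat}_m$ be statistics from $\{\mathrm{lmax},\mathrm{rmax},\mathrm{lmin},\mathrm{rmin}\}$, and let $I=\sum_{\pi}t^{|\pi|}z_1^{\mathrm{stat}_1(\pi)}\cdots z_m^{\mathrm{stat}_m(\pi)}$ over irreducible separable permutations and $R$ the same sum over reducible separable permutations. Let $\phi$ be either the reverse or the complement operation, and let $\mathrm{stat}'_1,\dots,\mathrm{stat}'_m$ be statistics such that $\mathrm{stat}'_i(\phi(\pi))=\mathrm{stat}_i(\pi)$ for all permutations $\pi$ and all $i$. Then $I-z_1\cdots z_mt$ and $R+z_1\cdots z_mt$ are the generating functions $\sum_\pi t^{|\pi|}z_1^{\mathrm{stat}'_1(\pi)}\cdots z_m^{\mathrm{stat}'_m(\pi)}$ over reducible and over irreducible separable permutations, respectively.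
   Context: A permutation of length $n$ is a word $\pi=\pi_1\cdots\pi_n$ containing each element of $[n]$ exactly once; $|\pi|=n$. Reverse: $r(\pi)=\pi_n\cdots\pi_1$; complement: $c(\pi)=(n+1-\pi_1)\cdots(n+1-\pi_n)$. For $\pi$ of length $m$, $\sigma$ of length $n$: $\pi\oplus\sigma=\pi_1\cdots\pi_m(\sigma_1+m)\cdots(\sigma_n+m)$, $\pi\ominus\sigma=(\pi_1+n)\cdots(\pi_m+n)\sigma_1\cdots\sigma_n$. Separable permutations are those of length $\ge1$ obtained from $1$ by repeatedly applying $\oplus,\ominus$ (equivalently, avoiding $2413$ and $3142$). The permutation $1$ is irreducible; a permutation of length $n\ge2$ is irreducible if there is no $i$, $2\le i\le n$, such that every element of $\pi_1\cdots\pi_{i-1}$ is less than every element of $\pi_i\cdots\pi_n$; reducible means not irreducible (length $\ge2$). $\pi_i$ is a left-to-right maximum (minimum) if $\pi_i>\pi_j$ ($\pi_i<\pi_j$) for all $j<i$, a right-to-left maximum (minimum) if $\pi_i>\pi_j$ ($\pi_i<\pi_j$) for all $j>i$; $\mathrm{lmax},\mathrm{lmin},\mathrm{rmax},\mathrm{rmin}$ count these. *)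

theory Defs
  imports "HOL-Computational_Algebra.Formal_Power_Series"
begin

definition is_perm :: "nat list \<Rightarrow> bool" where
  "is_perm p \<longleftrightarrow> distinct p \<and> set p = {1..length p}"

definition reverse_perm :: "nat list \<Rightarrow> nat list" where
  "reverse_perm p = rev p"

definition complement_perm :: "nat list \<Rightarrow> nat list" where
  "complement_perm p = map (\<lambda>x. length p + 1 - x) p"

definition direct_sum :: "nat list \<Rightarrow> nat list \<Rightarrow> nat list" where
  "direct_sum p s = p @ map (\<lambda>x. x + length p) s"

definition skew_sum :: "nat list \<Rightarrow> nat list \<Rightarrow> nat list" where
  "skew_sum p s = map (\<lambda>x. x + length s) p @ s"

inductive separable :: "nat list \<Rightarrow> bool" where
  sep_one: "separable [1]"
| sep_direct: "separable p \<Longrightarrow> separable s \<Longrightarrow> separable (direct_sum p s)"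
| sep_skew: "separable p \<Longrightarrow> separable s \<Longrightarrow> separable (skew_sum p s)"

text \<open>Irreducible (1-indexed position i with 2 \<le> i \<le> n splits p into p_1..p_(i-1) and p_i..p_n).\<close>
definition irreducible_perm :: "nat list \<Rightarrow> bool" where
  "irreducible_perm p \<longleftrightarrow> length p = 1 \<or>
     (length p \<ge> 2 \<and> \<not> (\<exists>i. 2 \<le> i \<and> i \<le> length p \<and>
        (\<forall>a \<in> set (take (i - 1) p). \<forall>b \<in> set (drop (i - 1) p). a < b)))"

definition reducible_perm :: "nat list \<Rightarrow> bool" where
  "reducible_perm p \<longleftrightarrow> length p \<ge> 2 \<and> \<not> irreducible_perm p"

definition lmax :: "nat list \<Rightarrow> nat" where
  "lmax p = card {i. i < length p \<and> (\<forall>j<i. p ! j < p ! i)}"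
definition lmin :: "nat list \<Rightarrow> nat" where
  "lmin p = card {i. i < length p \<and> (\<forall>j<i. p ! i < p ! j)}"
definition rmax :: "nat list \<Rightarrow> nat" where
  "rmax p = card {i. i < length p \<and> (\<forall>j. i < j \<and> j < length p \<longrightarrow> p ! j < p ! i)}"
definition rmin :: "nat list \<Rightarrow> nat" where
  "rmin p = card {i. i < length p \<and> (\<forall>j. i < j \<and> j < length p \<longrightarrow> p ! i < p ! j)}"

text \<open>Generating function \<Sum>_{p \<in> P} t^|p| z_1^{stat_1 p} ... z_m^{stat_m p} as a formal power
  series in t whose coefficients are evaluated at real values z_1..z_m (indexed 0..m-1).\<close>
definition gen_fun :: "(nat list \<Rightarrow> bool) \<Rightarrow> nat \<Rightarrow> (nat \<Rightarrow> nat list \<Rightarrow> nat) \<Rightarrow> (nat \<Rightarrow> real) \<Rightarrow> real fps" where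
  "gen_fun P m stat z = Abs_fps (\<lambda>n. \<Sum>p \<in> {p. P p \<and> length p = n}. \<Prod>i<m. z i ^ stat i p)"

end

theory Submission
  imports Defs
begin

text \<open>A separable permutation of length at least 2 is either a direct sum, hence reducible
  and with first entry smaller than its last, or a skew sum, hence irreducible and with last
  entry smaller than its first. Reverse and complement are involutions on separable
  permutations that reverse this comparison, so \<open>\<phi>\<close> maps the irreducible separable
  permutations of length at least 2 bijectively onto the reducible ones and vice versa,
  carrying each \<open>stat\<^sub>i\<close> to \<open>stat'\<^sub>i\<close>. The only remaining irreducible separable
  permutation is 1, on which all four statistics equal 1; it contributes
  \<open>z\<^sub>1 \<cdots> z\<^sub>m t\<close>.\<close>

lemma is_perm_shift:
  assumes "is_perm s"
  shows "distinct (map (\<lambda>x. x + k) s)" "set (map (\<lambda>x. x + k) s) = {k + 1..k + length s}"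
  using assms by (auto simp: is_perm_def distinct_map inj_on_def image_iff
      intro!: bexI[where x = "_ - k"])

lemma is_perm_direct_sum: "is_perm p \<Longrightarrow> is_perm s \<Longrightarrow> is_perm (direct_sum p s)"
  using is_perm_shift[of s "length p"] by (auto simp: is_perm_def direct_sum_def)

lemma is_perm_skew_sum: "is_perm p \<Longrightarrow> is_perm s \<Longrightarrow> is_perm (skew_sum p s)"
  using is_perm_shift[of p "length s"] by (auto simp: is_perm_def skew_sum_def)

lemma separable_is_perm: "separable p \<Longrightarrow> is_perm p"
  by (induction rule: separable.induct)
    (simp_all add: is_perm_direct_sum is_perm_skew_sum, simp add: is_perm_def)

lemma separable_nonempty: "separable p \<Longrightarrow> p \<noteq> []"
  by (induction rule: separable.induct) (simp_all add: direct_sum_def skew_sum_def)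

lemma separable_length_one: "separable p \<Longrightarrow> length p = 1 \<Longrightarrow> p = [1]"
  using separable_is_perm[of p] by (cases p) (auto simp: is_perm_def)

lemma rev_direct_sum: "rev (direct_sum p s) = skew_sum (rev s) (rev p)"
  by (simp add: direct_sum_def skew_sum_def rev_map)

lemma rev_skew_sum: "rev (skew_sum p s) = direct_sum (rev s) (rev p)"
  by (simp add: direct_sum_def skew_sum_def rev_map)

lemma complement_perm_direct_sum:
  "is_perm p \<Longrightarrow> is_perm s \<Longrightarrow>
    complement_perm (direct_sum p s) = skew_sum (complement_perm p) (complement_perm s)"
  by (auto simp: is_perm_def direct_sum_def skew_sum_def complement_perm_def)

lemma complement_perm_skew_sum:
  "is_perm p \<Longrightarrow> is_perm s \<Longrightarrow>
    complement_perm (skew_sum p s) = direct_sum (complement_perm p) (complement_perm s)"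
  by (auto simp: is_perm_def direct_sum_def skew_sum_def complement_perm_def)

lemma separable_rev: "separable p \<Longrightarrow> separable (rev p)"
proof (induction rule: separable.induct)
  case sep_one
  show ?case using separable.sep_one by simp
qed (simp_all add: rev_direct_sum rev_skew_sum separable.intros)

lemma separable_complement_perm: "separable p \<Longrightarrow> separable (complement_perm p)"
proof (induction rule: separable.induct)
  case sep_one
  show ?case using separable.sep_one by (simp add: complement_perm_def)
qed (simp_all add: complement_perm_direct_sum complement_perm_skew_sum separable_is_perm
    separable.intros)

lemma complement_perm_complement_perm: "is_perm p \<Longrightarrow> complement_perm (complement_perm p) = p"
  by (auto simp: is_perm_def complement_perm_def intro!: map_idI)

lemma reducible_perm_iff:
  "reducible_perm p \<longleftrightarrow> (\<exists>i. 2 \<le> i \<and> i \<le> length p \<and>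
     (\<forall>a \<in> set (take (i - 1) p). \<forall>b \<in> set (drop (i - 1) p). a < b))"
  by (auto simp: reducible_perm_def irreducible_perm_def)

lemma irreducible_iff_not_reducible:
  "p \<noteq> [] \<Longrightarrow> irreducible_perm p \<longleftrightarrow> \<not> reducible_perm p"
proof -
  assume "p \<noteq> []"
  then have "length p > 0" by simp
  then have "length p = 1 \<or> length p \<ge> 2" by linarith
  then show ?thesis by (auto simp: reducible_perm_def irreducible_perm_def)
qed

lemma reducible_perm_hd_less_last:
  assumes "reducible_perm p"
  shows "hd p < last p"
proof -
  obtain i where i: "2 \<le> i" "i \<le> length p"
    and split: "\<forall>a \<in> set (take (i - 1) p). \<forall>b \<in> set (drop (i - 1) p). a < b"
    using assms by (auto simp: reducible_perm_iff)
  have "hd p = hd (take (i - 1) p)" "take (i - 1) p \<noteq> []"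
    using i by (auto simp: hd_take take_eq_Nil)
  moreover have "last p = last (drop (i - 1) p)" "drop (i - 1) p \<noteq> []"
    using i by (auto simp: last_drop)
  ultimately show ?thesis using split by (metis hd_in_set last_in_set)
qed

lemma reducible_perm_direct_sum:
  assumes "is_perm p" "is_perm s" "p \<noteq> []" "s \<noteq> []"
  shows "reducible_perm (direct_sum p s)"
  unfolding reducible_perm_iff
proof (intro exI conjI)
  show "\<forall>a \<in> set (take (length p + 1 - 1) (direct_sum p s)).
      \<forall>b \<in> set (drop (length p + 1 - 1) (direct_sum p s)). a < b"
    using assms(1,2) by (auto simp: is_perm_def direct_sum_def)
qed (use assms(3,4) in \<open>auto simp: direct_sum_def Suc_le_eq\<close>)

lemma skew_sum_last_less_hd:
  assumes "is_perm p" "is_perm s" "p \<noteq> []" "s \<noteq> []"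
  shows "last (skew_sum p s) < hd (skew_sum p s)"
proof -
  have "last s \<le> length s" "1 \<le> hd p"
    using assms hd_in_set last_in_set by (fastforce simp: is_perm_def)+
  then show ?thesis using assms(3,4) by (simp add: skew_sum_def hd_map)
qed

lemma separable_reducible_iff_hd_less_last:
  assumes "separable p" "length p \<ge> 2"
  shows "reducible_perm p \<longleftrightarrow> hd p < last p"
  using assms
proof cases
  case sep_one
  with assms(2) show ?thesis by simp
next
  case (sep_direct a b)
  then have "reducible_perm p"
    by (simp add: reducible_perm_direct_sum separable_is_perm separable_nonempty)
  then show ?thesis using reducible_perm_hd_less_last by blast
next
  case (sep_skew a b)
  then have "last p < hd p"
    by (simp add: skew_sum_last_less_hd separable_is_perm separable_nonempty)
  then show ?thesis using reducible_perm_hd_less_last by fastforce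
qed

lemma hd_neq_last: "distinct xs \<Longrightarrow> length xs \<ge> 2 \<Longrightarrow> hd xs \<noteq> last xs"
  by (cases xs) (auto simp: last_ConsR dest!: last_in_set)

lemma separable_irreducible_iff_last_less_hd:
  assumes "separable p" "length p \<ge> 2"
  shows "irreducible_perm p \<longleftrightarrow> last p < hd p"
proof -
  have "hd p \<noteq> last p"
    using hd_neq_last assms separable_is_perm by (auto simp: is_perm_def)
  then show ?thesis
    using assms separable_reducible_iff_hd_less_last[OF assms]
      irreducible_iff_not_reducible separable_nonempty by auto
qed

lemma reducible_reverse_perm_iff:
  assumes "separable p" "length p \<ge> 2"
  shows "reducible_perm (reverse_perm p) \<longleftrightarrow> irreducible_perm p"
proof -
  have "reducible_perm (rev p) \<longleftrightarrow> hd (rev p) < last (rev p)"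
    using assms by (simp add: separable_reducible_iff_hd_less_last separable_rev)
  also have "\<dots> \<longleftrightarrow> last p < hd p"
    by (simp add: hd_rev last_rev)
  finally show ?thesis
    using assms by (simp add: reverse_perm_def separable_irreducible_iff_last_less_hd)
qed

lemma reducible_complement_perm_iff:
  assumes "separable p" "length p \<ge> 2"
  shows "reducible_perm (complement_perm p) \<longleftrightarrow> irreducible_perm p"
proof -
  define n where "n = length p"
  have "p \<noteq> []" "set p = {1..n}"
    using assms separable_is_perm by (auto simp: is_perm_def n_def)
  then have bounds: "hd p \<le> n" "last p \<le> n"
    using hd_in_set last_in_set by fastforce+
  have "length (complement_perm p) = length p"
    by (simp add: complement_perm_def)
  then have "reducible_perm (complement_perm p)
      \<longleftrightarrow> hd (complement_perm p) < last (complement_perm p)"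
    using assms separable_reducible_iff_hd_less_last separable_complement_perm by simp
  also have "\<dots> \<longleftrightarrow> n + 1 - hd p < n + 1 - last p"
    using \<open>p \<noteq> []\<close> by (simp add: complement_perm_def hd_map last_map n_def)
  also have "\<dots> \<longleftrightarrow> last p < hd p"
    using bounds by linarith
  finally show ?thesis
    using assms by (simp add: separable_irreducible_iff_last_less_hd)
qed

lemma separable_symmetry:
  assumes "\<phi> = reverse_perm \<or> \<phi> = complement_perm" "separable p"
  shows "separable (\<phi> p)" "length (\<phi> p) = length p" "\<phi> (\<phi> p) = p"
    "irreducible_perm p \<Longrightarrow> length p \<ge> 2 \<Longrightarrow> reducible_perm (\<phi> p)"
    "reducible_perm p \<Longrightarrow> irreducible_perm (\<phi> p)"
proof -
  show sep: "separable (\<phi> p)" and len: "length (\<phi> p) = length p"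
    and inv: "\<phi> (\<phi> p) = p"
    using assms separable_rev separable_complement_perm
      complement_perm_complement_perm separable_is_perm
    by (auto simp: reverse_perm_def complement_perm_def[of p])
  have swap: "reducible_perm (\<phi> q) \<longleftrightarrow> irreducible_perm q"
    if "separable q" "length q \<ge> 2" for q
    using assms(1) that reducible_reverse_perm_iff reducible_complement_perm_iff by blast
  show "irreducible_perm p \<Longrightarrow> length p \<ge> 2 \<Longrightarrow> reducible_perm (\<phi> p)"
    using swap assms(2) by blast
  assume "reducible_perm p"
  then show "irreducible_perm (\<phi> p)"
    using swap[of "\<phi> p"] sep len inv by (simp add: reducible_perm_def)
qed

lemma lmax_lmin_rmax_rmin_singleton: "lmax [1] = 1" "lmin [1] = 1" "rmax [1] = 1" "rmin [1] = 1"
proof -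
  have singleton: "\<And>P. {i. i < length [1::nat] \<and> P i} = (if P 0 then {0} else {})" by auto
  show "lmax [1] = 1" "lmin [1] = 1" "rmax [1] = 1" "rmin [1] = 1"
    unfolding lmax_def lmin_def rmax_def rmin_def singleton by simp_all
qed

lemma fps_nth_gen_fun:
  "fps_nth (gen_fun P m s z) n = (\<Sum>p | P p \<and> length p = n. \<Prod>i<m. z i ^ s i p)"
  by (simp add: gen_fun_def)

lemma gen_fun_eq_by_involution:
  assumes "\<And>p. P p \<Longrightarrow> Q (\<phi> p) \<and> \<phi> (\<phi> p) = p \<and> length (\<phi> p) = length p"
    and "\<And>q. Q q \<Longrightarrow> P (\<phi> q) \<and> \<phi> (\<phi> q) = q \<and> length (\<phi> q) = length q"
    and "\<And>i p. i < m \<Longrightarrow> P p \<Longrightarrow> stat' i (\<phi> p) = stat i p"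
  shows "gen_fun P m stat z = gen_fun Q m stat' z"
proof (rule fps_ext)
  fix n
  have "(\<Sum>p | P p \<and> length p = n. \<Prod>i<m. z i ^ stat i p)
      = (\<Sum>q | Q q \<and> length q = n. \<Prod>i<m. z i ^ stat' i q)"
  proof (rule sum.reindex_bij_witness[where i = \<phi> and j = \<phi>])
    fix p assume "p \<in> {p. P p \<and> length p = n}"
    then show "\<phi> (\<phi> p) = p" "\<phi> p \<in> {q. Q q \<and> length q = n}"
      "(\<Prod>i<m. z i ^ stat' i (\<phi> p)) = (\<Prod>i<m. z i ^ stat i p)"
      using assms(1,3) by auto
  next
    fix q assume "q \<in> {q. Q q \<and> length q = n}"
    then show "\<phi> (\<phi> q) = q" "\<phi> q \<in> {p. P p \<and> length p = n}"
      using assms(2) by auto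
  qed
  then show "fps_nth (gen_fun P m stat z) n = fps_nth (gen_fun Q m stat' z) n"
    by (simp only: fps_nth_gen_fun)
qed

lemma gen_fun_separable_irreducible:
  assumes "\<forall>i<m. s i [1] = 1"
  shows "gen_fun (\<lambda>p. separable p \<and> irreducible_perm p) m s z
    = fps_const (\<Prod>i<m. z i) * fps_X
      + gen_fun (\<lambda>p. separable p \<and> irreducible_perm p \<and> length p \<ge> 2) m s z"
    (is "?irr = _ + ?irr2")
proof (rule fps_ext)
  fix n
  show "fps_nth ?irr n = fps_nth (fps_const (\<Prod>i<m. z i) * fps_X + ?irr2) n"
  proof (cases "n = 1")
    case True
    have singleton: "{p. (separable p \<and> irreducible_perm p) \<and> length p = 1} = {[1]}"
    proof (intro equalityI subsetI)
      fix p assume "p \<in> {p. (separable p \<and> irreducible_perm p) \<and> length p = 1}"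
      then show "p \<in> {[1]}" using separable_length_one by blast
    qed (use sep_one in \<open>simp add: irreducible_perm_def\<close>)
    have "fps_nth ?irr2 1 = 0"
      unfolding fps_nth_gen_fun by (rule sum.neutral) auto
    moreover have "fps_nth ?irr 1 = (\<Prod>i<m. z i)"
      unfolding fps_nth_gen_fun singleton using assms by simp
    ultimately show ?thesis using True by simp
  next
    case False
    have "irreducible_perm p \<Longrightarrow> length p = 1 \<or> length p \<ge> 2" for p
      unfolding irreducible_perm_def by blast
    with False have "{p. (separable p \<and> irreducible_perm p) \<and> length p = n}
      = {p. (separable p \<and> irreducible_perm p \<and> length p \<ge> 2) \<and> length p = n}"
      by auto
    with False show ?thesis by (simp add: fps_nth_gen_fun)
  qed
qed

lemma gen_fun_separable_symmetry:
  assumes "\<phi> = reverse_perm \<or> \<phi> = complement_perm"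
    and "\<forall>i<m. \<forall>p. is_perm p \<longrightarrow> stat' i (\<phi> p) = stat i p"
  shows "gen_fun (\<lambda>p. separable p \<and> irreducible_perm p \<and> length p \<ge> 2) m stat z
      = gen_fun (\<lambda>p. separable p \<and> reducible_perm p) m stat' z"
    and "gen_fun (\<lambda>p. separable p \<and> reducible_perm p) m stat z
      = gen_fun (\<lambda>p. separable p \<and> irreducible_perm p \<and> length p \<ge> 2) m stat' z"
proof -
  note symmetry = separable_symmetry[OF assms(1)]
  have stat'_\<phi>: "stat' i (\<phi> p) = stat i p" if "i < m" "separable p" for i p
    using assms(2) that separable_is_perm by blast
  have reducible_length: "reducible_perm p \<Longrightarrow> length p \<ge> 2" for p
    by (simp add: reducible_perm_def)
  show "gen_fun (\<lambda>p. separable p \<and> irreducible_perm p \<and> length p \<ge> 2) m stat z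
      = gen_fun (\<lambda>p. separable p \<and> reducible_perm p) m stat' z"
    by (rule gen_fun_eq_by_involution[where \<phi> = \<phi>]) (auto simp: symmetry stat'_\<phi> reducible_length)
  show "gen_fun (\<lambda>p. separable p \<and> reducible_perm p) m stat z
      = gen_fun (\<lambda>p. separable p \<and> irreducible_perm p \<and> length p \<ge> 2) m stat' z"
    by (rule gen_fun_eq_by_involution[where \<phi> = \<phi>]) (auto simp: symmetry stat'_\<phi> reducible_length)
qed

theorem theorem11:
  fixes m :: nat and stat stat' :: "nat \<Rightarrow> nat list \<Rightarrow> nat"
    and \<phi> :: "nat list \<Rightarrow> nat list" and z :: "nat \<Rightarrow> real"
  assumes "\<forall>i<m. stat i \<in> {lmax, rmax, lmin, rmin}"
    and "\<phi> = reverse_perm \<or> \<phi> = complement_perm"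
    and "\<forall>i<m. \<forall>p. is_perm p \<longrightarrow> stat' i (\<phi> p) = stat i p"
  shows "(gen_fun (\<lambda>p. separable p \<and> irreducible_perm p) m stat z
           - fps_const (\<Prod>i<m. z i) * fps_X
         = gen_fun (\<lambda>p. separable p \<and> reducible_perm p) m stat' z)
       \<and> (gen_fun (\<lambda>p. separable p \<and> reducible_perm p) m stat z
           + fps_const (\<Prod>i<m. z i) * fps_X
         = gen_fun (\<lambda>p. separable p \<and> irreducible_perm p) m stat' z)"
proof -
  have stat_one: "\<forall>i<m. stat i [1] = 1"
    using assms(1) lmax_lmin_rmax_rmin_singleton by auto
  have "\<phi> [1] = [1]"
    using separable_symmetry[OF assms(2) sep_one] by (intro separable_length_one) simp_all
  then have stat'_one: "\<forall>i<m. stat' i [1] = 1"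
    using assms(3) stat_one separable_is_perm[OF sep_one] by metis
  show ?thesis
    using gen_fun_separable_symmetry[OF assms(2,3)]
      gen_fun_separable_irreducible[of m stat, OF stat_one]
      gen_fun_separable_irreducible[of m stat', OF stat'_one]
    by (simp add: algebra_simps)
qed

end
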